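(* Let $W$ be the affine Weyl group of type $A_n^{(1)}$ and $N\in\mathbb{N}$. The number of elements of $\widehat{\mathcal{B}}(N)=\{v\in\Sigma W^0\mid\mathcal{L}_{\Lambda_0}(v)=N\}$ is divisible by $n+1$.
   Context: Affine Kac–Moody setting of type $A_n^{(1)}$: $\mathfrak h^*$ contains simple roots $\alpha_0,\dots,\alpha_n$, null root $\delta=\sum_i\alpha_i$, affine fundamental weight $\Lambda_0$; $c=\sum_i\alpha_i^\vee$; $\rho^\vee\in\mathfrak h$ with $\langle\alpha_i,\rho^\vee\rangle=1$ for all $i$. $V_0=\bigoplus_{i=1}^n\mathbb{R}\alpha_i\cong\{x\in\mathbb{R}^{n+1}\mid\sum x_i=0\}$ via $\alpha_i=\varepsilon_i-\varepsilon_{i+1}$, standard dot product. For $x\in V_0$, $t_x(v)=v+\langle v,c\rangle x-((v|x)+\frac12|x|^2\langle v,c\rangle)\delta$. $W_0=\langle s_1,\dots,s_n\rangle$, $M=V_0\cap\mathbb{Z}^{n+1}$, $W=\langle s_0,\dots,s_n\rangle=T(M)\rtimes W_0$, $W^0=\{w\in W\mid \ell(ws_k)>\ell(w)\ \forall k=1,\dots,n\}$. Fundamental weights $\omega_i=(\varepsilon_1+\dots+\varepsilon_i)-\frac{i}{n+1}\sum_{k=1}^{n+1}\varepsilon_k$. $\sigma_0=e$, $\sigma_j=t_{\omega_j}w_{0,j}w_0$ for $1\le j\le n$ ($w_0$ longest element of $W_0$, $w_{0,j}$ longest element of the parabolic subgroup generated by $s_i$, $1\le i\le n$, $i\ne j$);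 $\Sigma=\{\sigma_0,\dots,\sigma_n\}$ and $\Sigma W^0=\{\sigma w\mid\sigma\in\Sigma,w\in W^0\}$. $\mathcal{L}_{\Lambda_0}(g)=\langle\Lambda_0-g\Lambda_0,\rho^\vee\rangle$ for $g\in GL(\mathfrak h^* )$. *)

theory Defs
  imports Complex_Main
begin

text \<open>Concrete model of \<open>h^*\<close> for type \<open>A_n^(1)\<close>:
  a triple \<open>(a, x, b)\<close> stands for \<open>a \<Lambda>_0 + x + b \<delta>\<close>, where the finite part
  \<open>x\<close> is a vector in \<open>R^(n+1)\<close> given by its coordinates \<open>x 1, ..., x (n+1)\<close>
  (the finite part of a genuine element of \<open>h^*\<close> lies in \<open>V_0\<close>, i.e. has
  coordinate sum zero and vanishing coordinates outside \<open>1..n+1\<close>; all maps below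
  act on the full type and preserve this subspace).\<close>

type_synonym hdual = "real \<times> (nat \<Rightarrow> real) \<times> real"

definition eps :: "nat \<Rightarrow> nat \<Rightarrow> real" where
  "eps i = (\<lambda>k. if k = i then 1 else 0)"

definition Lam0 :: hdual where "Lam0 = (1, (\<lambda>_. 0), 0)"
definition delta :: hdual where "delta = (0, (\<lambda>_. 0), 1)"

definition hadd :: "hdual \<Rightarrow> hdual \<Rightarrow> hdual" where
  "hadd u v = (fst u + fst v, (\<lambda>k. fst (snd u) k + fst (snd v) k), snd (snd u) + snd (snd v))"

definition hscale :: "real \<Rightarrow> hdual \<Rightarrow> hdual" where
  "hscale r v = (r * fst v, (\<lambda>k. r * fst (snd v) k), r * snd (snd v))"

definition hdiff :: "hdual \<Rightarrow> hdual \<Rightarrow> hdual" where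
  "hdiff u v = hadd u (hscale (-1) v)"

definition dot :: "nat \<Rightarrow> (nat \<Rightarrow> real) \<Rightarrow> (nat \<Rightarrow> real) \<Rightarrow> real" where
  "dot n x y = (\<Sum>k = 1..n+1. x k * y k)"

definition bform :: "nat \<Rightarrow> hdual \<Rightarrow> hdual \<Rightarrow> real" where
  "bform n u v = fst u * snd (snd v) + snd (snd u) * fst v + dot n (fst (snd u)) (fst (snd v))"

text \<open>Simple roots: \<open>\<alpha>_i = \<epsilon>_i - \<epsilon>_(i+1)\<close> for \<open>1 \<le> i \<le> n\<close>,
  \<open>\<alpha>_0 = \<delta> - \<theta> = \<delta> - (\<epsilon>_1 - \<epsilon>_(n+1))\<close>.\<close>
definition alpha :: "nat \<Rightarrow> nat \<Rightarrow> hdual" where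
  "alpha n i = (if i = 0 then (0, (\<lambda>k. eps (n+1) k - eps 1 k), 1)
                else (0, (\<lambda>k. eps i k - eps (i+1) k), 0))"

text \<open>Simple reflections \<open>s_i(v) = v - \<langle>v, \<alpha>_i^\<or>\<rangle> \<alpha>_i = v - (v|\<alpha>_i) \<alpha>_i\<close>.\<close>
definition sref :: "nat \<Rightarrow> nat \<Rightarrow> hdual \<Rightarrow> hdual" where
  "sref n i v = hdiff v (hscale (bform n v (alpha n i)) (alpha n i))"

definition wordfun :: "nat \<Rightarrow> nat list \<Rightarrow> hdual \<Rightarrow> hdual" where
  "wordfun n ws = foldr (\<lambda>i f. sref n i \<circ> f) ws id"

definition WJ :: "nat \<Rightarrow> nat set \<Rightarrow> (hdual \<Rightarrow> hdual) set" where
  "WJ n J = {wordfun n ws | ws. set ws \<subseteq> J}"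

definition Waff :: "nat \<Rightarrow> (hdual \<Rightarrow> hdual) set" where
  "Waff n = WJ n {0..n}"

definition Wfin :: "nat \<Rightarrow> (hdual \<Rightarrow> hdual) set" where
  "Wfin n = WJ n {1..n}"

definition len :: "nat \<Rightarrow> (hdual \<Rightarrow> hdual) \<Rightarrow> nat" where
  "len n w = (LEAST k. \<exists>ws. set ws \<subseteq> {0..n} \<and> length ws = k \<and> wordfun n ws = w)"

definition Wmin :: "nat \<Rightarrow> (hdual \<Rightarrow> hdual) set" where
  "Wmin n = {w \<in> Waff n. \<forall>k \<in> {1..n}. len n (w \<circ> sref n k) > len n w}"

definition longest :: "nat \<Rightarrow> (hdual \<Rightarrow> hdual) set \<Rightarrow> (hdual \<Rightarrow> hdual)" where
  "longest n S = (THE w. w \<in> S \<and> (\<forall>u \<in> S. len n u \<le> len n w))"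

definition w0 :: "nat \<Rightarrow> hdual \<Rightarrow> hdual" where
  "w0 n = longest n (Wfin n)"

definition w0j :: "nat \<Rightarrow> nat \<Rightarrow> hdual \<Rightarrow> hdual" where
  "w0j n j = longest n (WJ n ({1..n} - {j}))"

definition omega :: "nat \<Rightarrow> nat \<Rightarrow> nat \<Rightarrow> real" where
  "omega n j = (\<lambda>k. if 1 \<le> k \<and> k \<le> n + 1
                     then (if k \<le> j then 1 else 0) - real j / real (n + 1) else 0)"

text \<open>\<open>t_x(v) = v + \<langle>v,c\<rangle> x - ((v|x) + |x|^2/2 \<langle>v,c\<rangle>) \<delta>\<close>, where \<open>\<langle>v,c\<rangle>\<close> is the
  \<open>\<Lambda>_0\<close>-coefficient of \<open>v\<close>.\<close>
definition transl :: "nat \<Rightarrow> (nat \<Rightarrow> real) \<Rightarrow> hdual \<Rightarrow> hdual" where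
  "transl n x v = (let a = fst v; y = fst (snd v); b = snd (snd v) in
     (a, (\<lambda>k. y k + a * x k), b - (dot n y x + dot n x x / 2 * a)))"

definition sigma :: "nat \<Rightarrow> nat \<Rightarrow> hdual \<Rightarrow> hdual" where
  "sigma n j = (if j = 0 then id else transl n (omega n j) \<circ> w0j n j \<circ> w0 n)"

definition SigmaW0 :: "nat \<Rightarrow> (hdual \<Rightarrow> hdual) set" where
  "SigmaW0 n = {sigma n j \<circ> w | j w. j \<le> n \<and> w \<in> Wmin n}"

text \<open>Pairing with \<open>\<rho>^\<or>\<close>: \<open>\<langle>\<alpha>_i, \<rho>^\<or>\<rangle> = 1\<close> for all \<open>i\<close>, normalized by
  \<open>\<langle>\<Lambda>_0, \<rho>^\<or>\<rangle> = 0\<close> (irrelevant for \<open>\<L>\<close>, since \<open>\<Lambda>_0 - g \<Lambda>_0\<close> lies in the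
  root lattice for \<open>g \<in> \<Sigma> W\<close>).\<close>
definition rho_pair :: "nat \<Rightarrow> hdual \<Rightarrow> real" where
  "rho_pair n v = dot n (fst (snd v)) (\<lambda>k. (real n + 2 - 2 * real k) / 2)
                  + real (n + 1) * snd (snd v)"

definition LLam0 :: "nat \<Rightarrow> (hdual \<Rightarrow> hdual) \<Rightarrow> real" where
  "LLam0 n g = rho_pair n (hdiff Lam0 (g Lam0))"

definition Bhat :: "nat \<Rightarrow> nat \<Rightarrow> (hdual \<Rightarrow> hdual) set" where
  "Bhat n N = {v \<in> SigmaW0 n. LLam0 n v = real N}"

end

theory Submission
  imports Defs "HOL-Combinatorics.Transposition"
begin

text \<open>Every element of \<open>W\<close> acts as \<open>t_b \<circ> \<pi>_g\<close>, with \<open>\<pi>_g\<close> a permutation of the coordinates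
  of the finite part and \<open>b\<close> an integral vector. Counting the positive real roots sent to
  negative ones bounds the length from below by the number of inversions, and bubble sort
  attains this bound; hence the longest elements \<open>w_0\<close>, \<open>w_(0,j)\<close> are the reversals of the
  blocks \<open>{1..j}\<close>, \<open>{j+1..n+1}\<close>, and \<open>\<sigma>_j = t_(\<omega>_j) \<circ> \<pi>_(c_j)\<close> for the cyclic shift \<open>c_j\<close>.

  \<open>\<L>_(\<Lambda>_0)(t_b \<circ> \<pi>_g)\<close> is a quadratic function \<open>Q(b)\<close> of \<open>b\<close> alone, and the identity
  \<open>(n+1) \<omega>_j = \<rho> - \<rho> \<circ> c_j\<close> gives \<open>Q(\<omega>_j + \<pi> b) = Q(b)\<close>, so \<open>\<L>(\<sigma>_j w) = \<L>(w)\<close>.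
  The fractional parts of the coordinates of \<open>\<sigma>_j w \<Lambda>_0\<close> recover \<open>j\<close>, so
  \<open>(j, w) \<mapsto> \<sigma>_j w\<close> is a bijection from \<open>{0..n} \<times> {w \<in> W\<^sup>0 | \<L>(w) = N}\<close> onto
  \<open>\<B>(N)\<close>; the second factor is finite since \<open>Q(b) \<ge> |b|\<^sup>2/2\<close> for integral \<open>b\<close>.\<close>

abbreviation coords :: "nat \<Rightarrow> nat set" where
  "coords n \<equiv> {1..n+1}"

definition perm_vec :: "nat \<Rightarrow> (nat \<Rightarrow> nat) \<Rightarrow> (nat \<Rightarrow> real) \<Rightarrow> nat \<Rightarrow> real" where
  "perm_vec n g x = (\<lambda>k. if k \<in> coords n then x (g k) else x k)"

definition perm_act :: "nat \<Rightarrow> (nat \<Rightarrow> nat) \<Rightarrow> hdual \<Rightarrow> hdual" where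
  "perm_act n g v = (fst v, perm_vec n g (fst (snd v)), snd (snd v))"

text \<open>\<open>tperm n b g\<close> is \<open>t_b \<circ> \<pi>_g\<close>, where \<open>\<pi>_g \<epsilon>_p = \<epsilon>_(g\<^sup>-\<^sup>1 p)\<close> permutes the coordinates
  \<open>1..n+1\<close> of the finite part.\<close>

definition tperm :: "nat \<Rightarrow> (nat \<Rightarrow> real) \<Rightarrow> (nat \<Rightarrow> nat) \<Rightarrow> hdual \<Rightarrow> hdual" where
  "tperm n b g = transl n b \<circ> perm_act n g"

lemma dot_add_left: "dot n (\<lambda>k. x k + y k) z = dot n x z + dot n y z"
  by (simp add: dot_def sum.distrib algebra_simps)

lemma dot_scale_left: "dot n (\<lambda>k. c * x k) z = c * dot n x z"
  by (simp add: dot_def sum_distrib_left algebra_simps)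

lemma dot_commute: "dot n x y = dot n y x"
  by (simp add: dot_def mult.commute)

lemma dot_cong_right: "(\<And>k. k \<in> coords n \<Longrightarrow> y k = y' k) \<Longrightarrow> dot n x y = dot n x y'"
  unfolding dot_def by (rule sum.cong) auto

lemma dot_diff_right: "dot n x (\<lambda>k. y k - z k) = dot n x y - dot n x z"
  by (simp add: dot_def sum_subtractf algebra_simps)

lemma dot_perm_vec:
  assumes "bij_betw g (coords n) (coords n)"
  shows "dot n (perm_vec n g x) (perm_vec n g y) = dot n x y"
proof -
  have "dot n (perm_vec n g x) (perm_vec n g y) = (\<Sum>k\<in>coords n. x (g k) * y (g k))"
    unfolding dot_def perm_vec_def by (rule sum.cong) auto
  also have "\<dots> = dot n x y"
    using sum.reindex_bij_betw[OF assms, of "\<lambda>k. x k * y k"] by (simp add: dot_def)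
  finally show ?thesis .
qed

lemma transl_comp: "transl n a \<circ> transl n b = transl n (\<lambda>k. a k + b k)"
proof
  fix v :: hdual
  obtain c y d where v: "v = (c, y, d)" by (cases v) auto
  have "dot n (\<lambda>k. y k + c * b k) a = dot n y a + c * dot n a b"
    by (simp add: dot_add_left dot_scale_left dot_commute)
  moreover have "dot n y (\<lambda>k. a k + b k) = dot n y a + dot n y b"
    using dot_add_left[of n a b y] by (simp add: dot_commute)
  moreover have "dot n (\<lambda>k. a k + b k) (\<lambda>k. a k + b k) = dot n a a + 2 * dot n a b + dot n b b"
    unfolding dot_def by (simp add: algebra_simps sum.distrib sum_distrib_left)
  ultimately show "(transl n a \<circ> transl n b) v = transl n (\<lambda>k. a k + b k) v"
    unfolding v transl_def Let_def by (simp add: algebra_simps)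
qed

lemma perm_act_transl:
  assumes "bij_betw g (coords n) (coords n)"
  shows "perm_act n g \<circ> transl n b = transl n (perm_vec n g b) \<circ> perm_act n g"
proof
  fix v :: hdual
  obtain c y d where v: "v = (c, y, d)" by (cases v) auto
  have "perm_vec n g (\<lambda>k. y k + c * b k) = (\<lambda>k. perm_vec n g y k + c * perm_vec n g b k)"
    by (auto simp: perm_vec_def)
  then show "(perm_act n g \<circ> transl n b) v = (transl n (perm_vec n g b) \<circ> perm_act n g) v"
    unfolding v transl_def Let_def perm_act_def by (simp add: dot_perm_vec[OF assms])
qed

lemma perm_act_comp:
  assumes "\<forall>k\<in>coords n. h k \<in> coords n"
  shows "perm_act n h \<circ> perm_act n g = perm_act n (g \<circ> h)"
  using assms by (intro ext) (auto simp: perm_act_def perm_vec_def)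

lemma perm_act_cong:
  "(\<And>k. k \<in> coords n \<Longrightarrow> g k = h k) \<Longrightarrow> perm_act n g = perm_act n h"
  by (rule ext) (auto simp: perm_act_def perm_vec_def)

lemma tperm_comp:
  assumes "bij_betw g (coords n) (coords n)"
  shows "tperm n a g \<circ> tperm n b h = tperm n (\<lambda>k. a k + perm_vec n g b k) (h \<circ> g)"
proof -
  have "tperm n a g \<circ> tperm n b h = transl n a \<circ> (perm_act n g \<circ> transl n b) \<circ> perm_act n h"
    by (simp add: tperm_def comp_assoc)
  also have "\<dots> = (transl n a \<circ> transl n (perm_vec n g b)) \<circ> (perm_act n g \<circ> perm_act n h)"
    by (simp add: perm_act_transl[OF assms] comp_assoc)
  also have "\<dots> = tperm n (\<lambda>k. a k + perm_vec n g b k) (h \<circ> g)"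
    using bij_betwE[OF assms] by (simp add: transl_comp perm_act_comp tperm_def)
  finally show ?thesis .
qed

lemma tperm_cong:
  "a = b \<Longrightarrow> (\<And>k. k \<in> coords n \<Longrightarrow> g k = h k) \<Longrightarrow> tperm n a g = tperm n b h"
  unfolding tperm_def using perm_act_cong by metis

lemma transl_zero: "transl n (\<lambda>k. 0) = id"
  by (rule ext) (auto simp: transl_def Let_def dot_def)

lemma perm_act_id: "perm_act n id = id"
  by (rule ext) (auto simp: perm_act_def perm_vec_def)

lemma tperm_zero_id: "tperm n (\<lambda>k. 0) id = id"
  by (simp add: tperm_def transl_zero perm_act_id)

lemma tperm_Lam0: "tperm n b g Lam0 = (1, b, - (dot n b b / 2))"
  by (simp add: tperm_def Lam0_def perm_act_def perm_vec_def transl_def Let_def dot_def)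

lemma inj_tperm:
  assumes g: "bij_betw g (coords n) (coords n)"
  shows "inj (tperm n b g)"
proof -
  have "transl n (\<lambda>k. - b k) \<circ> transl n b = id"
    by (simp add: transl_comp transl_zero)
  then have "inj (transl n b)" by (metis inj_on_id inj_on_imageI2 image_comp image_id)
  moreover have "inj (perm_act n g)"
  proof (rule injI)
    fix v v' assume eq: "perm_act n g v = perm_act n g v'"
    have "fst (snd v) k = fst (snd v') k" for k
    proof (cases "k \<in> coords n")
      case True
      then obtain m where "m \<in> coords n" "k = g m" using bij_betw_imp_surj_on[OF g] by blast
      then show ?thesis using fun_cong[OF arg_cong[OF eq, of "fst \<circ> snd"], of m]
        by (simp add: perm_act_def perm_vec_def)
    next
      case False
      then show ?thesis using fun_cong[OF arg_cong[OF eq, of "fst \<circ> snd"], of k]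
        by (simp add: perm_act_def perm_vec_def split: if_splits)
    qed
    then show "v = v'" using eq by (auto simp: perm_act_def prod_eq_iff)
  qed
  ultimately show ?thesis unfolding tperm_def by (rule inj_compose)
qed

definition refl_perm :: "nat \<Rightarrow> nat \<Rightarrow> nat \<Rightarrow> nat" where
  "refl_perm n i = (if i = 0 then transpose 1 (n+1) else transpose i (Suc i))"

definition refl_shift :: "nat \<Rightarrow> nat \<Rightarrow> nat \<Rightarrow> int" where
  "refl_shift n i k = (if i = 0 \<and> k = 1 then 1 else if i = 0 \<and> k = n+1 then -1 else 0)"

lemma refl_perm_coords: "i \<le> n \<Longrightarrow> k \<in> coords n \<Longrightarrow> refl_perm n i k \<in> coords n"
  by (auto simp: refl_perm_def transpose_def)

lemma refl_perm_involutory [simp]: "refl_perm n i (refl_perm n i k) = k"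
  by (simp add: refl_perm_def)

lemma refl_perm_inj: "refl_perm n i p = refl_perm n i q \<Longrightarrow> p = q"
  by (metis refl_perm_involutory)

lemma bij_betw_refl_perm: "i \<le> n \<Longrightarrow> bij_betw (refl_perm n i) (coords n) (coords n)"
  by (rule bij_betw_byWitness[where f'="refl_perm n i"]) (use refl_perm_coords in auto)

lemma dot_eps: "p \<in> coords n \<Longrightarrow> dot n x (eps p) = x p"
  by (simp add: dot_def eps_def if_distrib cong: if_cong)

lemma dot_eps_diff:
  "p \<in> coords n \<Longrightarrow> q \<in> coords n \<Longrightarrow> dot n x (\<lambda>k. eps p k - eps q k) = x p - x q"
  by (simp add: dot_diff_right dot_eps)

lemma sref_0_eq_tperm:
  assumes n: "n \<ge> 1"
  shows "sref n 0 = tperm n (of_int \<circ> refl_shift n 0) (refl_perm n 0)"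
proof
  fix v :: hdual
  obtain a x b where v: "v = (a, x, b)" by (cases v) auto
  define \<theta> where "\<theta> = (\<lambda>k. eps 1 k - eps (n+1) k)"
  have shift: "of_int \<circ> refl_shift n 0 = \<theta>"
    using n by (auto simp: refl_shift_def eps_def \<theta>_def)
  have "dot n x (\<lambda>k. eps (n+1) k - eps 1 k) = x (n+1) - x 1"
    by (rule dot_eps_diff) auto
  then have lhs: "sref n 0 v = (a, \<lambda>k. x k - (a + (x (n+1) - x 1)) * (eps (n+1) k - eps 1 k),
      b - (a + (x (n+1) - x 1)))"
    unfolding v by (simp add: sref_def hdiff_def hadd_def hscale_def bform_def alpha_def)
  have "dot n (perm_vec n (refl_perm n 0) x) \<theta> = x (n+1) - x 1"
    using n unfolding \<theta>_def by (subst dot_eps_diff) (auto simp: perm_vec_def refl_perm_def)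
  moreover have "dot n \<theta> \<theta> = 2"
    using n unfolding \<theta>_def by (subst dot_eps_diff) (auto simp: eps_def)
  ultimately have rhs: "tperm n \<theta> (refl_perm n 0) v
      = (a, \<lambda>k. perm_vec n (refl_perm n 0) x k + a * \<theta> k, b - ((x (n+1) - x 1) + a))"
    unfolding v by (simp add: tperm_def transl_def perm_act_def Let_def)
  show "sref n 0 v = tperm n (of_int \<circ> refl_shift n 0) (refl_perm n 0) v"
    unfolding shift lhs rhs
    using n by (simp add: fun_eq_iff perm_vec_def refl_perm_def transpose_def \<theta>_def eps_def)
qed

lemma sref_eq_perm_act:
  assumes i: "1 \<le> i" "i \<le> n"
  shows "sref n i = perm_act n (refl_perm n i)"
proof
  fix v :: hdual
  obtain a x b where v: "v = (a, x, b)" by (cases v) auto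
  have "dot n x (\<lambda>k. eps i k - eps (i+1) k) = x i - x (i+1)"
    by (rule dot_eps_diff) (use i in auto)
  then have "sref n i v = (a, \<lambda>k. x k - (x i - x (i+1)) * (eps i k - eps (i+1) k), b)"
    using i unfolding v by (simp add: sref_def hdiff_def hadd_def hscale_def bform_def alpha_def)
  then show "sref n i v = perm_act n (refl_perm n i) v"
    using i unfolding v
    by (simp add: perm_act_def fun_eq_iff perm_vec_def refl_perm_def transpose_def eps_def)
qed

lemma sref_eq_tperm:
  assumes n: "n \<ge> 1" and i: "i \<le> n"
  shows "sref n i = tperm n (of_int \<circ> refl_shift n i) (refl_perm n i)"
proof (cases "i = 0")
  case False
  then have "real_of_int \<circ> refl_shift n i = (\<lambda>k. 0)" by (auto simp: refl_shift_def)
  then show ?thesis using False i by (simp add: sref_eq_perm_act tperm_def transl_zero)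
qed (simp add: sref_0_eq_tperm[OF n])

definition integral_tperm :: "nat \<Rightarrow> (hdual \<Rightarrow> hdual) \<Rightarrow> bool" where
  "integral_tperm n w \<longleftrightarrow> (\<exists>b g. w = tperm n b g \<and> bij_betw g (coords n) (coords n)
      \<and> (\<forall>k. b k \<in> \<int>) \<and> (\<forall>k. k \<notin> coords n \<longrightarrow> b k = 0))"

lemma wordfun_Nil: "wordfun n [] = id"
  by (simp add: wordfun_def)

lemma wordfun_Cons: "wordfun n (i # ws) = sref n i \<circ> wordfun n ws"
  by (simp add: wordfun_def)

lemma integral_tperm_sref_comp:
  assumes n: "n \<ge> 1" and i: "i \<le> n" and w: "integral_tperm n w"
  shows "integral_tperm n (sref n i \<circ> w)"
proof -
  obtain b g where w: "w = tperm n b g" and g: "bij_betw g (coords n) (coords n)"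
    and b: "\<forall>k. b k \<in> \<int>" "\<forall>k. k \<notin> coords n \<longrightarrow> b k = 0"
    using w unfolding integral_tperm_def by blast
  let ?b = "\<lambda>k. (of_int \<circ> refl_shift n i) k + perm_vec n (refl_perm n i) b k"
  have "sref n i \<circ> w = tperm n ?b (g \<circ> refl_perm n i)"
    unfolding w sref_eq_tperm[OF n i] by (rule tperm_comp[OF bij_betw_refl_perm[OF i]])
  moreover have "bij_betw (g \<circ> refl_perm n i) (coords n) (coords n)"
    using bij_betw_refl_perm[OF i] g by (rule bij_betw_trans)
  moreover have "\<forall>k. ?b k \<in> \<int>" "\<forall>k. k \<notin> coords n \<longrightarrow> ?b k = 0"
    using b n by (auto simp: perm_vec_def refl_shift_def)
  ultimately show ?thesis unfolding integral_tperm_def by blast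
qed

lemma integral_tperm_wordfun:
  assumes n: "n \<ge> 1" and ws: "set ws \<subseteq> {0..n}"
  shows "integral_tperm n (wordfun n ws)"
  using ws
proof (induction ws)
  case Nil
  have "wordfun n [] = tperm n (\<lambda>k. 0) id" by (simp add: wordfun_Nil tperm_zero_id)
  then show ?case unfolding integral_tperm_def by fastforce
next
  case (Cons i ws)
  then show ?case unfolding wordfun_Cons by (intro integral_tperm_sref_comp[OF n]) auto
qed

lemma integral_tperm_Waff: "n \<ge> 1 \<Longrightarrow> w \<in> Waff n \<Longrightarrow> integral_tperm n w"
  unfolding Waff_def WJ_def using integral_tperm_wordfun by blast

lemma inj_wordfun: "n \<ge> 1 \<Longrightarrow> set ws \<subseteq> {0..n} \<Longrightarrow> inj (wordfun n ws)"
  by (metis integral_tperm_wordfun inj_tperm integral_tperm_def)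

definition aff_root :: "nat \<Rightarrow> nat \<Rightarrow> int \<Rightarrow> hdual" where
  "aff_root p q k = (0, \<lambda>t. eps p t - eps q t, of_int k)"

definition is_root :: "nat \<Rightarrow> hdual \<Rightarrow> bool" where
  "is_root n v \<longleftrightarrow> (\<exists>p q k. p \<in> coords n \<and> q \<in> coords n \<and> p \<noteq> q \<and> v = aff_root p q k)"

definition neg_root :: "nat \<Rightarrow> hdual \<Rightarrow> bool" where
  "neg_root n v \<longleftrightarrow> (\<exists>p q k. p \<in> coords n \<and> q \<in> coords n \<and> p \<noteq> q \<and> v = aff_root p q k
      \<and> (k < 0 \<or> k = 0 \<and> q < p))"

lemma aff_root_inj:
  assumes "p \<noteq> q" "p' \<noteq> q'" "aff_root p q k = aff_root p' q' k'"
  shows "p = p' \<and> q = q' \<and> k = k'"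
proof -
  have eq: "eps p t - eps q t = eps p' t - eps q' t" for t
    using assms(3) unfolding aff_root_def by (metis fst_conv snd_conv)
  have "p' = p" using eq[of p] assms(1) by (auto simp: eps_def split: if_splits)
  moreover have "q' = q" using eq[of q] assms by (auto simp: eps_def split: if_splits)
  moreover have "k = k'" using assms(3) unfolding aff_root_def by simp
  ultimately show ?thesis by simp
qed

lemma neg_root_iff:
  assumes "p \<in> coords n" "q \<in> coords n" "p \<noteq> q"
  shows "neg_root n (aff_root p q k) \<longleftrightarrow> k < 0 \<or> k = 0 \<and> q < p"
  using assms aff_root_inj[OF assms(3)] unfolding neg_root_def by metis

lemma alpha_eq_aff_root:
  "alpha n 0 = aff_root (n+1) 1 1"
  "i \<noteq> 0 \<Longrightarrow> alpha n i = aff_root i (i+1) 0"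
  by (auto simp: alpha_def aff_root_def)

lemma perm_vec_aff_root:
  assumes g: "\<forall>k\<in>coords n. g k \<in> coords n \<and> g (g k) = k" and "p \<in> coords n" "q \<in> coords n"
  shows "perm_vec n g (\<lambda>t. eps p t - eps q t) = (\<lambda>t. eps (g p) t - eps (g q) t)"
proof
  fix t
  have "g t = a \<longleftrightarrow> t = g a" if "t \<in> coords n" "a \<in> coords n" for a
    using g that by metis
  then show "perm_vec n g (\<lambda>t. eps p t - eps q t) t = eps (g p) t - eps (g q) t"
    using assms by (cases "t \<in> coords n") (auto simp: perm_vec_def eps_def)
qed

lemma perm_act_aff_root:
  assumes "\<forall>k\<in>coords n. g k \<in> coords n \<and> g (g k) = k" "p \<in> coords n" "q \<in> coords n"
  shows "perm_act n g (aff_root p q k) = aff_root (g p) (g q) k"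
  using perm_vec_aff_root[OF assms] by (simp add: perm_act_def aff_root_def)

lemma sref_aff_root:
  assumes n: "n \<ge> 1" and i: "i \<le> n" and p: "p \<in> coords n" and q: "q \<in> coords n"
  shows "sref n i (aff_root p q k) = aff_root (refl_perm n i p) (refl_perm n i q)
    (k - refl_shift n i (refl_perm n i p) + refl_shift n i (refl_perm n i q))"
proof -
  let ?p = "refl_perm n i p" and ?q = "refl_perm n i q"
  have "\<forall>k\<in>coords n. refl_perm n i k \<in> coords n \<and> refl_perm n i (refl_perm n i k) = k"
    using refl_perm_coords[OF i] by simp
  then have "perm_act n (refl_perm n i) (aff_root p q k) = aff_root ?p ?q k"
    using p q by (rule perm_act_aff_root)
  moreover have "dot n (\<lambda>t. eps ?p t - eps ?q t) (of_int \<circ> refl_shift n i)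
      = of_int (refl_shift n i ?p) - of_int (refl_shift n i ?q)"
    using dot_eps_diff[OF refl_perm_coords[OF i p] refl_perm_coords[OF i q]]
    by (simp add: dot_commute)
  ultimately show ?thesis
    unfolding sref_eq_tperm[OF n i] by (simp add: tperm_def transl_def Let_def aff_root_def)
qed

lemma is_root_sref:
  assumes "n \<ge> 1" "i \<le> n" "is_root n v"
  shows "is_root n (sref n i v)"
  using assms sref_aff_root refl_perm_coords refl_perm_inj unfolding is_root_def by metis

lemma neg_root_sref:
  assumes n: "n \<ge> 1" and i: "i \<le> n" and v: "is_root n v" "\<not> neg_root n v"
    and neg: "neg_root n (sref n i v)"
  shows "v = alpha n i"
proof -
  obtain p q k where pq: "p \<in> coords n" "q \<in> coords n" "p \<noteq> q" and v_eq: "v = aff_root p q k"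
    using v(1) unfolding is_root_def by blast
  let ?p = "refl_perm n i p" and ?q = "refl_perm n i q"
  let ?k = "k - refl_shift n i ?p + refl_shift n i ?q"
  have "\<not> (k < 0 \<or> k = 0 \<and> q < p)"
    using v(2) neg_root_iff[OF pq] v_eq by simp
  moreover have "?k < 0 \<or> ?k = 0 \<and> ?q < ?p"
    using neg neg_root_iff[OF refl_perm_coords[OF i pq(1)] refl_perm_coords[OF i pq(2)]]
      refl_perm_inj pq(3)
    unfolding v_eq sref_aff_root[OF n i pq(1,2)] by blast
  ultimately have "if i = 0 then p = n + 1 \<and> q = 1 \<and> k = 1 else p = i \<and> q = i + 1 \<and> k = 0"
    using pq n i by (auto simp: refl_perm_def refl_shift_def transpose_def split: if_splits)
  then show ?thesis using v_eq alpha_eq_aff_root by (auto split: if_splits)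
qed

definition neg_set :: "nat \<Rightarrow> (hdual \<Rightarrow> hdual) \<Rightarrow> (nat \<times> nat) set" where
  "neg_set n w = {(p, q). p \<in> coords n \<and> q \<in> coords n \<and> p < q \<and> neg_root n (w (aff_root p q 0))}"

lemma finite_neg_set: "finite (neg_set n w)"
  by (rule finite_subset[of _ "coords n \<times> coords n"]) (auto simp: neg_set_def)

lemma is_root_wordfun:
  assumes "n \<ge> 1" "set ws \<subseteq> {0..n}" "is_root n v"
  shows "is_root n (wordfun n ws v)"
  using assms(2)
proof (induction ws)
  case (Cons i ws)
  then show ?case using is_root_sref[OF assms(1)] by (simp add: wordfun_Cons)
qed (simp add: wordfun_Nil assms(3))

lemma card_neg_set_sref_comp:
  assumes n: "n \<ge> 1" and i: "i \<le> n"
    and roots: "\<And>v. is_root n v \<Longrightarrow> is_root n (w v)" and "inj w"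
  shows "card (neg_set n (sref n i \<circ> w)) \<le> card (neg_set n w) + 1"
proof -
  define A where "A = {(p, q). p \<in> coords n \<and> q \<in> coords n \<and> p < q \<and> w (aff_root p q 0) = alpha n i}"
  have sub: "neg_set n (sref n i \<circ> w) \<subseteq> neg_set n w \<union> A"
  proof
    fix x assume x: "x \<in> neg_set n (sref n i \<circ> w)"
    then obtain p q where x_eq: "x = (p, q)" and pq: "p \<in> coords n" "q \<in> coords n" "p < q"
      and neg: "neg_root n (sref n i (w (aff_root p q 0)))"
      unfolding neg_set_def by auto
    have "is_root n (aff_root p q 0)"
      using pq unfolding is_root_def by fastforce
    then have "is_root n (w (aff_root p q 0))" by (rule roots)
    then show "x \<in> neg_set n w \<union> A"
      using neg_root_sref[OF n i _ _ neg] pq unfolding x_eq neg_set_def A_def by auto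
  qed
  have "finite A"
    by (rule finite_subset[of _ "coords n \<times> coords n"]) (auto simp: A_def)
  have "card A \<le> 1"
  proof -
    have "x = y" if "x \<in> A" "y \<in> A" for x y
    proof -
      obtain p q p' q' where xy: "x = (p, q)" "y = (p', q')" by fastforce
      have "w (aff_root p q 0) = w (aff_root p' q' 0)" "p < q" "p' < q'"
        using that unfolding xy A_def by auto
      then show ?thesis
        using aff_root_inj[of p q p' q'] injD[OF \<open>inj w\<close>] unfolding xy by fastforce
    qed
    with \<open>finite A\<close> show ?thesis by (simp add: card_le_Suc0_iff_eq)
  qed
  have "card (neg_set n (sref n i \<circ> w)) \<le> card (neg_set n w \<union> A)"
    using sub finite_neg_set \<open>finite A\<close> by (intro card_mono) auto
  also have "\<dots> \<le> card (neg_set n w) + card A" by (rule card_Un_le)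
  finally show ?thesis using \<open>card A \<le> 1\<close> by simp
qed

lemma card_neg_set_wordfun:
  assumes n: "n \<ge> 1" and "set ws \<subseteq> {0..n}"
  shows "card (neg_set n (wordfun n ws)) \<le> length ws"
  using assms(2)
proof (induction ws)
  case Nil
  have "neg_set n (wordfun n []) = {}"
    by (auto simp: neg_set_def wordfun_Nil neg_root_iff)
  then show ?case by simp
next
  case (Cons i ws)
  then have "card (neg_set n (sref n i \<circ> wordfun n ws)) \<le> card (neg_set n (wordfun n ws)) + 1"
    using is_root_wordfun[OF n] inj_wordfun[OF n] by (intro card_neg_set_sref_comp[OF n]) auto
  moreover have "card (neg_set n (wordfun n ws)) \<le> length ws" using Cons by simp
  ultimately show ?case unfolding wordfun_Cons list.size by linarith
qed

lemma len_wordfun_le: "set ws \<subseteq> {0..n} \<Longrightarrow> len n (wordfun n ws) \<le> length ws"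
  unfolding len_def by (rule Least_le) blast

lemma reduced_word_exists:
  assumes "w \<in> Waff n"
  obtains ws where "set ws \<subseteq> {0..n}" "length ws = len n w" "wordfun n ws = w"
proof -
  obtain ws where "set ws \<subseteq> {0..n}" "wordfun n ws = w"
    using assms unfolding Waff_def WJ_def by blast
  then have "\<exists>k ws. set ws \<subseteq> {0..n} \<and> length ws = k \<and> wordfun n ws = w" by blast
  from LeastI_ex[OF this] show ?thesis using that unfolding len_def by blast
qed

lemma card_neg_set_le_len: "n \<ge> 1 \<Longrightarrow> w \<in> Waff n \<Longrightarrow> card (neg_set n w) \<le> len n w"
  by (metis reduced_word_exists card_neg_set_wordfun)

definition block_perm :: "nat \<Rightarrow> nat \<Rightarrow> (nat \<Rightarrow> nat) \<Rightarrow> bool" where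
  "block_perm n j g \<longleftrightarrow> (\<forall>k\<in>coords n. g k \<in> coords n) \<and> inj_on g (coords n)
      \<and> (\<forall>k\<in>coords n. g k \<le> j \<longleftrightarrow> k \<le> j)"

definition inv_pairs :: "nat \<Rightarrow> (nat \<Rightarrow> nat) \<Rightarrow> (nat \<times> nat) set" where
  "inv_pairs n g = {(p, q). p \<in> coords n \<and> q \<in> coords n \<and> p < q \<and> g q < g p}"

definition block_rev :: "nat \<Rightarrow> nat \<Rightarrow> nat \<Rightarrow> nat" where
  "block_rev n j k = (if k \<le> j then j + 1 - k else j + n + 2 - k)"

lemma finite_inv_pairs: "finite (inv_pairs n g)"
  by (rule finite_subset[of _ "coords n \<times> coords n"]) (auto simp: inv_pairs_def)

lemma perm_act_refl_perm_comp:
  "i \<le> n \<Longrightarrow> perm_act n (refl_perm n i) \<circ> perm_act n g = perm_act n (g \<circ> refl_perm n i)"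
  using refl_perm_coords by (intro perm_act_comp) blast

lemma block_perm_comp_refl_perm:
  assumes g: "block_perm n j g" and i: "1 \<le> i" "i \<le> n" "i \<noteq> j"
  shows "block_perm n j (g \<circ> refl_perm n i)"
proof -
  have "inj_on (g \<circ> refl_perm n i) (coords n)"
    using g bij_betw_refl_perm[OF i(2)] unfolding block_perm_def bij_betw_def
    by (intro comp_inj_on) auto
  moreover have "refl_perm n i k \<le> j \<longleftrightarrow> k \<le> j" for k
    using i by (auto simp: refl_perm_def transpose_def)
  ultimately show ?thesis
    using g refl_perm_coords[OF i(2)] unfolding block_perm_def by auto
qed

lemma WJ_block_perm:
  assumes n: "n \<ge> 1" and "set ws \<subseteq> {1..n} - {j}"
  shows "\<exists>g. block_perm n j g \<and> wordfun n ws = perm_act n g"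
  using assms(2)
proof (induction ws)
  case Nil
  have "block_perm n j id" by (simp add: block_perm_def)
  then show ?case by (metis wordfun_Nil perm_act_id)
next
  case (Cons i ws)
  then obtain g where g: "block_perm n j g" "wordfun n ws = perm_act n g" by auto
  have i: "1 \<le> i" "i \<le> n" "i \<noteq> j" using Cons.prems by auto
  have "wordfun n (i # ws) = perm_act n (g \<circ> refl_perm n i)"
    unfolding wordfun_Cons g(2) sref_eq_perm_act[OF i(1,2)] by (rule perm_act_refl_perm_comp[OF i(2)])
  then show ?case using block_perm_comp_refl_perm[OF g(1) i] by blast
qed

lemma rank_eq_card_less:
  assumes f: "\<forall>k\<in>coords n. f k \<in> coords n" "inj_on f (coords n)" and k: "k \<in> coords n"
  shows "f k = Suc (card {q \<in> coords n. f q < f k})"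
proof -
  have surj: "f ` coords n = coords n" using f by (intro endo_inj_surj) auto
  have "{m \<in> coords n. m < f k} = f ` {q \<in> coords n. f q < f k}"
  proof (intro equalityI subsetI)
    fix m assume m: "m \<in> {m \<in> coords n. m < f k}"
    then obtain q where "q \<in> coords n" "m = f q" using surj by (metis (no_types, lifting) imageE mem_Collect_eq)
    then show "m \<in> f ` {q \<in> coords n. f q < f k}" using m by auto
  qed (use f in auto)
  moreover have "inj_on f {q \<in> coords n. f q < f k}" by (rule inj_on_subset[OF f(2)]) auto
  moreover have "{m \<in> coords n. m < f k} = {1..<f k}" using f k by fastforce
  ultimately have "card {q \<in> coords n. f q < f k} = f k - 1"
    by (metis card_image card_atLeastLessThan)
  moreover have "1 \<le> f k" using f k by auto
  ultimately show ?thesis by simp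
qed

lemma eq_if_inv_pairs_eq:
  assumes g: "\<forall>k\<in>coords n. g k \<in> coords n" "inj_on g (coords n)"
    and h: "\<forall>k\<in>coords n. h k \<in> coords n" "inj_on h (coords n)"
    and eq: "inv_pairs n g = inv_pairs n h" and k: "k \<in> coords n"
  shows "g k = h k"
proof -
  have "g p < g k \<longleftrightarrow> h p < h k" if p: "p \<in> coords n" for p
  proof -
    consider "p < k" | "p = k" | "k < p" by linarith
    then show ?thesis
    proof cases
      case 1
      have "g k \<noteq> g p" "h k \<noteq> h p" using 1 g h p k by (auto dest: inj_onD)
      moreover have "(p, k) \<in> inv_pairs n g \<longleftrightarrow> (p, k) \<in> inv_pairs n h" using eq by simp
      ultimately show ?thesis using 1 p k by (auto simp: inv_pairs_def)
    next
      case 3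
      have "(k, p) \<in> inv_pairs n g \<longleftrightarrow> (k, p) \<in> inv_pairs n h" using eq by simp
      then show ?thesis using 3 p k by (simp add: inv_pairs_def)
    qed simp
  qed
  then have "{q \<in> coords n. g q < g k} = {q \<in> coords n. h q < h k}" by blast
  then show ?thesis using rank_eq_card_less[OF g k] rank_eq_card_less[OF h k] by simp
qed

lemma card_inv_pairs_comp_refl_perm:
  assumes i: "1 \<le> i" "i \<le> n" and descent: "g (Suc i) < g i"
  shows "card (inv_pairs n g) = Suc (card (inv_pairs n (g \<circ> refl_perm n i)))"
proof -
  let ?t = "refl_perm n i"
  define swap_pair where "swap_pair = (\<lambda>(p, q). (?t p, ?t q))"
  have t: "?t = transpose i (Suc i)" using i by (simp add: refl_perm_def)
  have order: "?t p < ?t q" if "p < q" "(p, q) \<noteq> (i, Suc i)" for p q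
    using that unfolding t transpose_def by auto
  have "swap_pair ` inv_pairs n (g \<circ> ?t) = inv_pairs n g - {(i, Suc i)}"
  proof (intro equalityI subsetI)
    fix x assume "x \<in> swap_pair ` inv_pairs n (g \<circ> ?t)"
    then obtain p q where pq: "p \<in> coords n" "q \<in> coords n" "p < q" "g (?t q) < g (?t p)"
      and x: "x = (?t p, ?t q)"
      unfolding swap_pair_def inv_pairs_def by auto
    have "(p, q) \<noteq> (i, Suc i)" using pq(4) descent by (auto simp: t)
    with pq(3) have "?t p < ?t q" by (rule order)
    moreover have "(?t p, ?t q) \<noteq> (i, Suc i)" using pq(3) unfolding t transpose_def by auto
    ultimately show "x \<in> inv_pairs n g - {(i, Suc i)}"
      using pq refl_perm_coords[OF i(2)] unfolding x inv_pairs_def by auto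
  next
    fix x assume x: "x \<in> inv_pairs n g - {(i, Suc i)}"
    then obtain p q where pq: "p \<in> coords n" "q \<in> coords n" "p < q" "g q < g p"
      "(p, q) \<noteq> (i, Suc i)" and x_eq: "x = (p, q)"
      unfolding inv_pairs_def by auto
    have "(?t p, ?t q) \<in> inv_pairs n (g \<circ> ?t)"
      using order[OF pq(3,5)] pq refl_perm_coords[OF i(2)] unfolding inv_pairs_def by auto
    moreover have "x = swap_pair (?t p, ?t q)" by (simp add: swap_pair_def x_eq)
    ultimately show "x \<in> swap_pair ` inv_pairs n (g \<circ> ?t)" by blast
  qed
  moreover have "inj_on swap_pair (inv_pairs n (g \<circ> ?t))"
    by (rule inj_onI) (auto simp: swap_pair_def dest: refl_perm_inj)
  ultimately have "card (inv_pairs n g - {(i, Suc i)}) = card (inv_pairs n (g \<circ> ?t))"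
    by (metis card_image)
  moreover have "(i, Suc i) \<in> inv_pairs n g" using i descent by (auto simp: inv_pairs_def)
  ultimately show ?thesis using finite_inv_pairs by (metis card_Suc_Diff1)
qed

lemma descent_exists:
  assumes "(p, q) \<in> inv_pairs n g"
  shows "\<exists>i\<in>{1..n}. g (Suc i) < g i"
proof -
  have mono: "g p \<le> g q'" if "p \<le> q'" "\<forall>i\<in>{p..<q'}. g i \<le> g (Suc i)" for q'
    using that
  proof (induction q')
    case (Suc q')
    show ?case
    proof (cases "p = Suc q'")
      case False
      then have "g p \<le> g q'" using Suc by auto
      also have "g q' \<le> g (Suc q')" using Suc False by auto
      finally show ?thesis .
    qed simp
  qed simp
  have "p \<le> q" "g q < g p" "1 \<le> p" "q \<le> n + 1" using assms by (auto simp: inv_pairs_def)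
  then obtain i where "i \<in> {p..<q}" "g (Suc i) < g i" using mono[of q] by fastforce
  then show ?thesis using \<open>1 \<le> p\<close> \<open>q \<le> n + 1\<close> by auto
qed

lemma block_perm_word:
  assumes n: "n \<ge> 1" and "block_perm n j g"
  shows "\<exists>ws. set ws \<subseteq> {1..n} - {j} \<and> length ws = card (inv_pairs n g) \<and> wordfun n ws = perm_act n g"
  using assms(2)
proof (induction "card (inv_pairs n g)" arbitrary: g)
  case 0
  then have "inv_pairs n g = inv_pairs n id"
    using finite_inv_pairs by (auto simp: inv_pairs_def)
  then have "perm_act n g = perm_act n id"
    using 0 eq_if_inv_pairs_eq[of n g id] by (intro perm_act_cong) (auto simp: block_perm_def)
  then show ?case using 0 by (metis wordfun_Nil perm_act_id empty_subsetI list.size(3) set_empty)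
next
  case (Suc m g)
  then have "inv_pairs n g \<noteq> {}" by auto
  then obtain p q where "(p, q) \<in> inv_pairs n g" by auto
  then obtain i where "i \<in> {1..n}" and descent: "g (Suc i) < g i"
    using descent_exists by blast
  then have i: "1 \<le> i" "i \<le> n" by auto
  have "i \<noteq> j"
  proof
    assume "i = j"
    then have "g i \<le> j" "\<not> g (Suc i) \<le> j" using Suc.prems i unfolding block_perm_def by auto
    then show False using descent by simp
  qed
  let ?g = "g \<circ> refl_perm n i"
  have g': "block_perm n j ?g" using block_perm_comp_refl_perm[OF Suc.prems i \<open>i \<noteq> j\<close>] .
  have card: "card (inv_pairs n g) = Suc (card (inv_pairs n ?g))"
    using card_inv_pairs_comp_refl_perm[OF i descent] .
  obtain ws where ws: "set ws \<subseteq> {1..n} - {j}" "length ws = card (inv_pairs n ?g)"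
    "wordfun n ws = perm_act n ?g"
    using Suc.hyps(1)[of ?g] Suc.hyps(2) card g' by auto
  have "wordfun n (i # ws) = perm_act n (?g \<circ> refl_perm n i)"
    unfolding wordfun_Cons ws(3) sref_eq_perm_act[OF i] by (rule perm_act_refl_perm_comp[OF i(2)])
  also have "\<dots> = perm_act n g" by (rule perm_act_cong) simp
  finally have "wordfun n (i # ws) = perm_act n g" .
  moreover have "set (i # ws) \<subseteq> {1..n} - {j}" using ws(1) i \<open>i \<noteq> j\<close> by auto
  moreover have "length (i # ws) = card (inv_pairs n g)" using ws(2) card by simp
  ultimately show ?case by blast
qed

lemma block_rev_coords: "j \<le> n \<Longrightarrow> k \<in> coords n \<Longrightarrow> block_rev n j k \<in> coords n"
  by (auto simp: block_rev_def)

lemma block_rev_involutory: "j \<le> n \<Longrightarrow> k \<in> coords n \<Longrightarrow> block_rev n j (block_rev n j k) = k"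
  unfolding block_rev_def by (cases "k \<le> j") auto

lemma bij_betw_block_rev:
  assumes "j \<le> n"
  shows "bij_betw (block_rev n j) (coords n) (coords n)"
  by (rule bij_betw_byWitness[where f'="block_rev n j"])
    (use block_rev_coords[OF assms] block_rev_involutory[OF assms] in blast)+

lemma block_perm_block_rev:
  assumes "j \<le> n"
  shows "block_perm n j (block_rev n j)"
proof -
  have "block_rev n j k \<le> j \<longleftrightarrow> k \<le> j" if "k \<in> coords n" for k
    using assms that by (auto simp: block_rev_def)
  then show ?thesis
    using block_rev_coords[OF assms] bij_betw_imp_inj_on[OF bij_betw_block_rev[OF assms]]
    unfolding block_perm_def by blast
qed

text \<open>No block permutation inverts a pair across the two blocks, while the block reversal
  inverts every pair inside a block.\<close>

lemma inv_pairs_subset_block_rev: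
  assumes j: "j \<le> n" and g: "block_perm n j g"
  shows "inv_pairs n g \<subseteq> inv_pairs n (block_rev n j)"
proof
  fix x assume "x \<in> inv_pairs n g"
  then obtain p q where x: "x = (p, q)" and pq: "p \<in> coords n" "q \<in> coords n" "p < q" "g q < g p"
    unfolding inv_pairs_def by auto
  have "g p \<le> j \<longleftrightarrow> p \<le> j" "g q \<le> j \<longleftrightarrow> q \<le> j"
    using g pq(1,2) unfolding block_perm_def by auto
  then have "\<not> (p \<le> j \<and> j < q)" using pq(4) by linarith
  then show "x \<in> inv_pairs n (block_rev n j)"
    using pq j unfolding x inv_pairs_def by (auto simp: block_rev_def)
qed

lemma neg_set_perm_act:
  assumes g: "\<forall>k\<in>coords n. g k \<in> coords n \<and> g (g k) = k"
  shows "neg_set n (perm_act n g) = inv_pairs n g"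
proof -
  have "neg_root n (perm_act n g (aff_root p q 0)) \<longleftrightarrow> g q < g p"
    if pq: "p \<in> coords n" "q \<in> coords n" "p < q" for p q
  proof -
    have "g p \<noteq> g q" using g pq by (metis less_irrefl)
    then show ?thesis
      using g pq perm_act_aff_root[OF g pq(1,2)] neg_root_iff[of "g p" n "g q"] by simp
  qed
  then show ?thesis unfolding neg_set_def inv_pairs_def by blast
qed

lemma len_WJ_le_inv_pairs:
  assumes n: "n \<ge> 1" and u: "u \<in> WJ n ({1..n} - {j})"
  obtains g where "block_perm n j g" "u = perm_act n g" "len n u \<le> card (inv_pairs n g)"
proof -
  obtain vs where vs: "set vs \<subseteq> {1..n} - {j}" "u = wordfun n vs"
    using u unfolding WJ_def by blast
  obtain g where g: "block_perm n j g" "u = perm_act n g"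
    using WJ_block_perm[OF n vs(1)] vs(2) by blast
  obtain vs' where vs': "set vs' \<subseteq> {1..n} - {j}" "length vs' = card (inv_pairs n g)"
    "wordfun n vs' = perm_act n g"
    using block_perm_word[OF n g(1)] by blast
  have "set vs' \<subseteq> {0..n}" using vs'(1) by auto
  then have "len n u \<le> card (inv_pairs n g)"
    using len_wordfun_le[of vs' n] vs'(2,3) g(2) by simp
  with g show ?thesis by (rule that)
qed

lemma block_rev_in_WJ:
  assumes n: "n \<ge> 1" and j: "j \<le> n"
  shows "perm_act n (block_rev n j) \<in> WJ n ({1..n} - {j})"
    and "len n (perm_act n (block_rev n j)) = card (inv_pairs n (block_rev n j))"
proof -
  let ?c = "perm_act n (block_rev n j)"
  obtain ws where ws: "set ws \<subseteq> {1..n} - {j}" "length ws = card (inv_pairs n (block_rev n j))"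
    "wordfun n ws = ?c"
    using block_perm_word[OF n block_perm_block_rev[OF j]] by blast
  show "?c \<in> WJ n ({1..n} - {j})"
    unfolding WJ_def using ws(1) ws(3)[symmetric] by blast
  have "set ws \<subseteq> {0..n}" using ws(1) by auto
  then have "?c \<in> Waff n"
    unfolding Waff_def WJ_def using ws(3)[symmetric] by blast
  have "len n ?c \<le> length ws"
    using len_wordfun_le[OF \<open>set ws \<subseteq> {0..n}\<close>] ws(3) by simp
  moreover have "card (inv_pairs n (block_rev n j)) \<le> len n ?c"
    using card_neg_set_le_len[OF n \<open>?c \<in> Waff n\<close>] block_rev_coords[OF j] block_rev_involutory[OF j]
    by (simp add: neg_set_perm_act)
  ultimately show "len n ?c = card (inv_pairs n (block_rev n j))" using ws(2) by linarith
qed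

lemma longest_parabolic:
  assumes n: "n \<ge> 1" and j: "j \<le> n"
  shows "longest n (WJ n ({1..n} - {j})) = perm_act n (block_rev n j)"
  unfolding longest_def
proof (rule the_equality)
  let ?S = "WJ n ({1..n} - {j})" and ?c = "perm_act n (block_rev n j)"
  have maximal: "len n u \<le> len n ?c \<and> (len n u = len n ?c \<longrightarrow> u = ?c)" if u: "u \<in> ?S" for u
  proof -
    obtain g where g: "block_perm n j g" "u = perm_act n g" "len n u \<le> card (inv_pairs n g)"
      using len_WJ_le_inv_pairs[OF n u] .
    have sub: "inv_pairs n g \<subseteq> inv_pairs n (block_rev n j)"
      using inv_pairs_subset_block_rev[OF j g(1)] .
    have card_le: "card (inv_pairs n g) \<le> len n ?c"
      using card_mono[OF finite_inv_pairs sub] block_rev_in_WJ(2)[OF n j] by simp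
    have "u = ?c" if "len n u = len n ?c"
    proof -
      have inv_eq: "inv_pairs n g = inv_pairs n (block_rev n j)"
        using card_subset_eq[OF finite_inv_pairs sub] card_le g(3) that block_rev_in_WJ(2)[OF n j]
        by linarith
      have "\<forall>k\<in>coords n. g k \<in> coords n" "inj_on g (coords n)"
        "\<forall>k\<in>coords n. block_rev n j k \<in> coords n" "inj_on (block_rev n j) (coords n)"
        using g(1) block_perm_block_rev[OF j] unfolding block_perm_def by blast+
      from eq_if_inv_pairs_eq[OF this inv_eq] have "perm_act n g = ?c" by (rule perm_act_cong)
      then show "u = ?c" using g(2) by simp
    qed
    then show ?thesis using g(3) card_le by linarith
  qed
  show "?c \<in> ?S \<and> (\<forall>u\<in>?S. len n u \<le> len n ?c)"
    using block_rev_in_WJ(1)[OF n j] maximal by blast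
  fix w assume "w \<in> ?S \<and> (\<forall>u\<in>?S. len n u \<le> len n w)"
  then show "w = ?c" using maximal block_rev_in_WJ(1)[OF n j] by (meson antisym)
qed

definition cyc_shift :: "nat \<Rightarrow> nat \<Rightarrow> nat \<Rightarrow> nat" where
  "cyc_shift n j k = (if k \<le> j then n + 1 - j + k else k - j)"

lemma block_rev_comp_eq_cyc_shift:
  "j \<le> n \<Longrightarrow> k \<in> coords n \<Longrightarrow> block_rev n 0 (block_rev n j k) = cyc_shift n j k"
  unfolding block_rev_def cyc_shift_def by (cases "k \<le> j") auto

lemma bij_betw_cyc_shift:
  assumes j: "j \<le> n"
  shows "bij_betw (cyc_shift n j) (coords n) (coords n)"
proof -
  have "bij_betw (block_rev n 0 \<circ> block_rev n j) (coords n) (coords n)"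
    using bij_betw_block_rev[OF j] bij_betw_block_rev[of 0 n] by (rule bij_betw_trans) simp
  then show ?thesis
    by (rule bij_betw_cong[THEN iffD1, rotated]) (simp add: block_rev_comp_eq_cyc_shift[OF j])
qed

lemma sigma_eq_tperm:
  assumes n: "n \<ge> 1" and j: "j \<le> n"
  shows "sigma n j = tperm n (omega n j) (cyc_shift n j)"
proof (cases "j = 0")
  case True
  have "tperm n (omega n 0) (cyc_shift n 0) = tperm n (\<lambda>k. 0) id"
    by (rule tperm_cong) (auto simp: omega_def cyc_shift_def)
  then show ?thesis using True by (simp add: sigma_def tperm_zero_id)
next
  case False
  have "w0 n = perm_act n (block_rev n 0)"
    unfolding w0_def Wfin_def using longest_parabolic[OF n, of 0] by simp
  moreover have "w0j n j = perm_act n (block_rev n j)"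
    unfolding w0j_def using longest_parabolic[OF n j] .
  moreover have "perm_act n (block_rev n j) \<circ> perm_act n (block_rev n 0)
      = perm_act n (block_rev n 0 \<circ> block_rev n j)"
    by (rule perm_act_comp) (use block_rev_coords[OF j] in blast)
  moreover have "\<dots> = perm_act n (cyc_shift n j)"
    by (rule perm_act_cong) (simp add: block_rev_comp_eq_cyc_shift[OF j])
  ultimately show ?thesis using False by (simp add: sigma_def tperm_def comp_assoc)
qed

definition rho_vec :: "nat \<Rightarrow> nat \<Rightarrow> real" where
  "rho_vec n k = (real n + 2 - 2 * real k) / 2"

definition quad :: "nat \<Rightarrow> (nat \<Rightarrow> real) \<Rightarrow> real" where
  "quad n b = real (n + 1) / 2 * dot n b b - dot n b (rho_vec n)"

lemma LLam0_tperm: "LLam0 n (tperm n b g) = quad n b"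
proof -
  have "(\<lambda>k. (real n + 2 - 2 * real k) / 2) = rho_vec n" by (simp add: rho_vec_def fun_eq_iff)
  then show ?thesis
    using dot_scale_left[of n "-1" b "rho_vec n"] unfolding LLam0_def tperm_Lam0
    by (simp add: rho_pair_def hdiff_def hadd_def hscale_def Lam0_def quad_def)
qed

lemma omega_eq_rho_diff:
  assumes j: "j \<le> n" and k: "k \<in> coords n"
  shows "real (n + 1) * omega n j k = rho_vec n k - rho_vec n (cyc_shift n j k)"
proof -
  have "real (n + 1) * omega n j k = (if k \<le> j then real n + 1 - real j else - real j)"
    using k by (simp add: omega_def field_simps)
  moreover have "rho_vec n k - rho_vec n (cyc_shift n j k) = real (cyc_shift n j k) - real k"
    by (simp add: rho_vec_def field_simps)
  moreover have "real (cyc_shift n j k) = (if k \<le> j then real n + 1 - real j + real k else real k - real j)"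
    using j by (simp add: cyc_shift_def of_nat_diff)
  ultimately show ?thesis by simp
qed

text \<open>If \<open>(n+1) a = \<rho> - \<pi>_g \<rho>\<close>, then \<open>quad a = 0\<close> (because \<open>\<pi>_g \<rho>\<close> and \<open>\<rho>\<close> have the same
  length), and the cross term \<open>(n+1) (a|\<pi>_g b)\<close> exactly compensates the change of the linear
  term under \<open>b \<mapsto> \<pi>_g b\<close>.\<close>

lemma quad_shift_perm:
  assumes g: "bij_betw g (coords n) (coords n)"
    and a: "\<And>k. k \<in> coords n \<Longrightarrow> real (n + 1) * a k = rho_vec n k - rho_vec n (g k)"
  shows "quad n (\<lambda>k. a k + perm_vec n g b k) = quad n b"
proof -
  define c where "c = real (n + 1)"
  define \<rho> where "\<rho> = rho_vec n"
  define v where "v = perm_vec n g \<rho>"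
  define pb where "pb = perm_vec n g b"
  have ca: "c * dot n x a = dot n x \<rho> - dot n x v" for x
  proof -
    have "c * dot n x a = dot n x (\<lambda>k. c * a k)"
      using dot_scale_left[of n c a x] by (simp add: dot_commute)
    also have "\<dots> = dot n x (\<lambda>k. \<rho> k - v k)"
      using a unfolding c_def \<rho>_def v_def perm_vec_def by (intro dot_cong_right) simp
    finally show ?thesis by (simp add: dot_diff_right)
  qed
  have vv: "dot n v v = dot n \<rho> \<rho>" and pbv: "dot n pb v = dot n b \<rho>" and pbpb: "dot n pb pb = dot n b b"
    unfolding v_def pb_def using dot_perm_vec[OF g] by auto
  have "c * dot n a v = c * (- dot n a \<rho>)"
    using ca[of v] ca[of \<rho>] vv dot_commute[of n v \<rho>] dot_commute[of n a] by simp
  then have "dot n a v = - dot n a \<rho>" unfolding c_def by (rule mult_left_cancel[THEN iffD1, rotated]) simp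
  then have aa: "c * dot n a a = 2 * dot n a \<rho>" using ca[of a] by simp
  have apb: "c * dot n a pb = dot n pb \<rho> - dot n b \<rho>"
    using ca[of pb] pbv dot_commute[of n a pb] by simp
  have "quad n (\<lambda>k. a k + pb k) = c / 2 * (dot n a a + 2 * dot n a pb + dot n pb pb) - dot n a \<rho> - dot n pb \<rho>"
    unfolding quad_def c_def \<rho>_def using dot_commute[of n pb a]
    by (simp add: dot_add_left dot_commute[of n _ "\<lambda>k. a k + pb k"] algebra_simps)
  also have "\<dots> = c / 2 * dot n b b - dot n b \<rho>"
    using aa apb pbpb by (simp add: algebra_simps)
  finally show ?thesis unfolding quad_def c_def \<rho>_def pb_def .
qed

lemma sigma_comp_tperm:
  assumes n: "n \<ge> 1" and j: "j \<le> n"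
  shows "sigma n j \<circ> tperm n b g
    = tperm n (\<lambda>k. omega n j k + perm_vec n (cyc_shift n j) b k) (g \<circ> cyc_shift n j)"
  unfolding sigma_eq_tperm[OF n j] by (rule tperm_comp[OF bij_betw_cyc_shift[OF j]])

lemma LLam0_sigma_comp:
  assumes n: "n \<ge> 1" and j: "j \<le> n" and w: "w \<in> Waff n"
  shows "LLam0 n (sigma n j \<circ> w) = LLam0 n w"
proof -
  obtain b g where "w = tperm n b g"
    using integral_tperm_Waff[OF n w] unfolding integral_tperm_def by blast
  then show ?thesis
    using quad_shift_perm[OF bij_betw_cyc_shift[OF j] omega_eq_rho_diff[OF j]]
    by (simp add: sigma_comp_tperm[OF n j] LLam0_tperm)
qed

lemma eq_if_diff_div_Ints:
  assumes "j \<le> n" "k \<le> n" and "(real k - real j) / real (n + 1) \<in> \<int>"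
  shows "j = k"
proof -
  have "\<bar>real k - real j\<bar> < real (n + 1)" using assms(1,2) by linarith
  then have "\<bar>(real k - real j) / real (n + 1)\<bar> < 1" by (simp add: abs_divide)
  with assms(3) have "(real k - real j) / real (n + 1) = 0" by (rule Ints_nonzero_abs_less1)
  then show ?thesis by simp
qed

text \<open>The coordinates of \<open>\<sigma>_j w \<Lambda>_0\<close> are congruent to \<open>-j/(n+1)\<close> modulo \<open>\<int>\<close>,
  so they determine \<open>j\<close>.\<close>

lemma sigma_comp_inj:
  assumes n: "n \<ge> 1" and j: "j \<le> n" and k: "k \<le> n" and w: "w \<in> Waff n" and w': "w' \<in> Waff n"
    and eq: "sigma n j \<circ> w = sigma n k \<circ> w'"
  shows "j = k \<and> w = w'"
proof -
  obtain b g where w_eq: "w = tperm n b g" and b: "\<forall>m. b m \<in> \<int>"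
    using integral_tperm_Waff[OF n w] unfolding integral_tperm_def by blast
  obtain b' g' where w'_eq: "w' = tperm n b' g'" and b': "\<forall>m. b' m \<in> \<int>"
    using integral_tperm_Waff[OF n w'] unfolding integral_tperm_def by blast
  have "omega n j (n+1) + b (cyc_shift n j (n+1)) = omega n k (n+1) + b' (cyc_shift n k (n+1))"
    using arg_cong[OF eq, of "\<lambda>f. fst (snd (f Lam0)) (n+1)"]
    by (simp add: w_eq w'_eq sigma_comp_tperm[OF n] j k tperm_Lam0 perm_vec_def)
  moreover have "omega n j (n+1) = - (real j / real (n+1))" "omega n k (n+1) = - (real k / real (n+1))"
    using j k by (auto simp: omega_def)
  ultimately have "(real k - real j) / real (n+1) = b' (cyc_shift n k (n+1)) - b (cyc_shift n j (n+1))"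
    by (simp add: diff_divide_distrib)
  then have "(real k - real j) / real (n+1) \<in> \<int>"
    using b b' by (simp add: Ints_diff)
  with j k have "j = k" by (rule eq_if_diff_div_Ints)
  moreover have "inj (sigma n j)"
    unfolding sigma_eq_tperm[OF n j] by (rule inj_tperm[OF bij_betw_cyc_shift[OF j]])
  ultimately show ?thesis
    using eq by (auto simp: fun_eq_iff dest: injD)
qed

lemma abs_le_square_if_Ints:
  fixes x :: real
  assumes "x \<in> \<int>"
  shows "\<bar>x\<bar> \<le> x\<^sup>2"
proof (cases "x = 0")
  case False
  then have "\<bar>x\<bar> * 1 \<le> \<bar>x\<bar> * \<bar>x\<bar>"
    using Ints_nonzero_abs_ge1[OF assms] by (intro mult_left_mono) auto
  then show ?thesis by (simp add: power2_eq_square)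
qed simp

lemma quad_eq_sum: "quad n b = (\<Sum>k\<in>coords n. real (n + 1) / 2 * (b k)\<^sup>2 - b k * rho_vec n k)"
  unfolding quad_def dot_def power2_eq_square by (simp only: sum_subtractf sum_distrib_left)

lemma quad_term_ge:
  assumes k: "k \<in> coords n" and x: "x \<in> \<int>"
  shows "x\<^sup>2 / 2 \<le> real (n + 1) / 2 * x\<^sup>2 - x * rho_vec n k"
proof -
  have "\<bar>rho_vec n k\<bar> \<le> real n / 2" using k by (auto simp: rho_vec_def)
  then have "x * rho_vec n k \<le> \<bar>x\<bar> * (real n / 2)"
    by (metis abs_ge_self abs_ge_zero abs_mult mult_left_mono order_trans)
  also have "\<dots> \<le> x\<^sup>2 * (real n / 2)"
    using abs_le_square_if_Ints[OF x] by (intro mult_right_mono) auto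
  finally show ?thesis by (simp add: algebra_simps)
qed

lemma abs_le_if_quad_eq:
  assumes b: "\<forall>k. b k \<in> \<int>" and quad: "quad n b = real N" and k: "k \<in> coords n"
  shows "\<bar>b k\<bar> \<le> 2 * real N"
proof -
  let ?t = "\<lambda>m. real (n + 1) / 2 * (b m)\<^sup>2 - b m * rho_vec n m"
  have t_ge: "(b m)\<^sup>2 / 2 \<le> ?t m" if "m \<in> coords n" for m
    using quad_term_ge[OF that] b by blast
  have t_nonneg: "0 \<le> ?t m" if "m \<in> coords n" for m
    using t_ge[OF that] zero_le_power2[of "b m"] by linarith
  have "(b k)\<^sup>2 / 2 \<le> ?t k" using t_ge[OF k] .
  also have "\<dots> \<le> (\<Sum>m\<in>coords n. ?t m)"
    using t_nonneg by (intro member_le_sum[OF k]) auto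
  also have "\<dots> = real N" using quad by (simp add: quad_eq_sum)
  finally have "(b k)\<^sup>2 \<le> 2 * real N" by simp
  then show ?thesis using abs_le_square_if_Ints[of "b k"] b by fastforce
qed

lemma Waff_LLam0_normal_form:
  assumes n: "n \<ge> 1" and w: "w \<in> Waff n" and L: "LLam0 n w = real N"
  obtains f g where "w = tperm n (real_of_int \<circ> f) g"
    "\<forall>k. (k \<in> coords n \<longrightarrow> f k \<in> {-int (2 * N)..int (2 * N)}) \<and> (k \<notin> coords n \<longrightarrow> f k = 0)"
    "\<forall>k. (k \<in> coords n \<longrightarrow> g k \<in> coords n) \<and> (k \<notin> coords n \<longrightarrow> g k = 0)"
proof -
  obtain b g where w_eq: "w = tperm n b g" and g: "bij_betw g (coords n) (coords n)"
    and b: "\<forall>k. b k \<in> \<int>" "\<forall>k. k \<notin> coords n \<longrightarrow> b k = 0"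
    using integral_tperm_Waff[OF n w] unfolding integral_tperm_def by blast
  define f where "f k = \<lfloor>b k\<rfloor>" for k
  define g' where "g' k = (if k \<in> coords n then g k else 0)" for k
  have b_eq: "b = real_of_int \<circ> f"
    using b(1) by (auto simp: f_def fun_eq_iff elim!: Ints_cases)
  have "w = tperm n (real_of_int \<circ> f) g'"
    unfolding w_eq b_eq by (rule tperm_cong) (simp_all add: g'_def)
  moreover have "f k \<in> {-int (2 * N)..int (2 * N)}" if "k \<in> coords n" for k
  proof -
    have "quad n b = real N" using L by (simp add: w_eq LLam0_tperm)
    from abs_le_if_quad_eq[OF b(1) this that] show ?thesis by (simp add: b_eq abs_le_iff)
  qed
  moreover have "f k = 0" if "k \<notin> coords n" for k
    using b(2) that by (simp add: f_def)
  moreover have "g' k \<in> coords n" if "k \<in> coords n" for k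
    using bij_betwE[OF g] that by (simp add: g'_def)
  ultimately show ?thesis by (intro that[of f g']) (auto simp: g'_def)
qed

lemma finite_Waff_LLam0:
  assumes n: "n \<ge> 1"
  shows "finite {w \<in> Waff n. LLam0 n w = real N}"
proof -
  define F where "F = {f :: nat \<Rightarrow> int. \<forall>k. (k \<in> coords n \<longrightarrow> f k \<in> {-int (2 * N)..int (2 * N)})
      \<and> (k \<notin> coords n \<longrightarrow> f k = 0)}"
  define G where "G = {g :: nat \<Rightarrow> nat. \<forall>k. (k \<in> coords n \<longrightarrow> g k \<in> coords n) \<and> (k \<notin> coords n \<longrightarrow> g k = 0)}"
  have "{w \<in> Waff n. LLam0 n w = real N} \<subseteq> (\<lambda>(f, g). tperm n (real_of_int \<circ> f) g) ` (F \<times> G)"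
  proof
    fix w assume "w \<in> {w \<in> Waff n. LLam0 n w = real N}"
    then obtain f g where "w = tperm n (real_of_int \<circ> f) g" "f \<in> F" "g \<in> G"
      using Waff_LLam0_normal_form[OF n] unfolding F_def G_def by blast
    then show "w \<in> (\<lambda>(f, g). tperm n (real_of_int \<circ> f) g) ` (F \<times> G)"
      by (intro image_eqI[of _ _ "(f, g)"]) simp_all
  qed
  moreover have "finite F" unfolding F_def by (rule finite_set_of_finite_funs) auto
  moreover have "finite G" unfolding G_def by (rule finite_set_of_finite_funs) auto
  ultimately show ?thesis by (meson finite_SigmaI finite_imageI finite_subset)
qed

lemma Bhat_eq_image:
  assumes n: "n \<ge> 1"
  shows "Bhat n N = (\<lambda>(j, w). sigma n j \<circ> w) ` ({..n} \<times> {w \<in> Wmin n. LLam0 n w = real N})"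
proof -
  have "LLam0 n (sigma n j \<circ> w) = LLam0 n w" if "j \<le> n" "w \<in> Wmin n" for j w
    using LLam0_sigma_comp[OF n that(1)] that(2) unfolding Wmin_def by blast
  then show ?thesis unfolding Bhat_def SigmaW0_def by fastforce
qed

lemma inj_on_sigma_comp:
  assumes n: "n \<ge> 1"
  shows "inj_on (\<lambda>(j, w). sigma n j \<circ> w) ({..n} \<times> Waff n)"
  using sigma_comp_inj[OF n] by (intro inj_onI) auto

theorem corollary4p8:
  fixes n N :: nat
  assumes "n \<ge> 1"
  shows "finite (Bhat n N) \<and> (n + 1) dvd card (Bhat n N)"
proof -
  define B0 where "B0 = {w \<in> Wmin n. LLam0 n w = real N}"
  have "B0 \<subseteq> {w \<in> Waff n. LLam0 n w = real N}" unfolding B0_def Wmin_def by blast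
  then have "finite B0" using finite_Waff_LLam0[OF assms] by (rule finite_subset)
  have "{..n} \<times> B0 \<subseteq> {..n} \<times> Waff n" unfolding B0_def Wmin_def by blast
  with inj_on_sigma_comp[OF assms] have "inj_on (\<lambda>(j, w). sigma n j \<circ> w) ({..n} \<times> B0)"
    by (rule inj_on_subset)
  then have "card (Bhat n N) = (n + 1) * card B0"
    unfolding Bhat_eq_image[OF assms] B0_def[symmetric] by (simp add: card_image card_cartesian_product)
  moreover have "finite (Bhat n N)"
    unfolding Bhat_eq_image[OF assms] B0_def[symmetric] using \<open>finite B0\<close> by simp
  ultimately show ?thesis by (metis dvd_triv_left)
qed

end
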